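(* Let $\mathbf p=(p_1,p_2,p_3,p_4)$ be an agreeable memory-one strategy for X with $\mathbf p\neq(1,1,0,0)$. Then $\mathbf p$ is of Nash type if and only if $$\frac{T-R}{R-S}\,p_3\le 1-p_2\qquad\text{and}\qquad \frac{T-R}{R-P}\,p_4\le 1-p_2 .$$ Moreover, $\mathbf p$ is good if and only if both of these inequalities are strict.
   Context: Iterated Prisoner's Dilemma: payoffs $T>R>P>S$ with $2R>T+S$; outcomes of a round are ordered $cc,cd,dc,dd$ (first letter X's play, second Y's; $c$ = cooperate, $d$ = defect); payoff vectors $\mathbf S_X=(R,S,T,P)$, $\mathbf S_Y=(R,T,S,P)$. A memory-one strategy for X is $\mathbf p=(p_1,p_2,p_3,p_4)\in[0,1]^4$, where $p_i$ is the probability that X plays $c$ in the next round given that the current round had the $i$-th outcome. A strategy pattern for Y is an arbitrary (possibly randomized and history-dependent) rule for Y's play in each round. Given initial plays and the rules used, let $\mathbf v^n$ be the probability distribution of the outcome of round $n$; a limit distribution is any limit point $\mathbf v$ of the Cesàro averages $\frac1n\sum_{k=1}^n\mathbf v^k$, and the associated expected payoffs are $s_X=\langle\mathbf v\cdot\mathbf S_X\rangle$, $s_Y=\langle\mathbf v\cdot\mathbf S_Y\rangle$. $\mathbf p$ is agreeable if $p_1=1$. $\mathbf p$ is of Nash type if it is agreeable and, for every strategy pattern of Y and every associated limit distribution, $s_Y\ge R$ implies $s_Y=R$. $\mathbf p$ is good if it is agreeable and, for every strategy pattern of Y and every associated limit distribution, $s_Y\ge R$ implies $s_Y=s_X=R$.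 *)

theory Defs
  imports Complex_Main
begin

text \<open>Outcomes of one round: first letter X's play, second Y's play.\<close>
datatype outcome = CC | CD | DC | DD

text \<open>A memory-one strategy for X is a function outcome => [0,1]; p CC = p1, p CD = p2,
  p DC = p3, p DD = p4.\<close>
definition mem1 :: "(outcome \<Rightarrow> real) \<Rightarrow> bool" where
  "mem1 p \<longleftrightarrow> (\<forall>w. 0 \<le> p w \<and> p w \<le> 1)"

definition agreeable :: "(outcome \<Rightarrow> real) \<Rightarrow> bool" where
  "agreeable p \<longleftrightarrow> p CC = 1"

text \<open>A strategy pattern for Y (behavioural form): the probability that Y cooperates in the
  next round as a function of the whole history of previous outcomes
  (histories are lists, most recent outcome first; the empty history gives Y's initial play).\<close>
definition Y_pattern :: "(outcome list \<Rightarrow> real) \<Rightarrow> bool" where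
  "Y_pattern y \<longleftrightarrow> (\<forall>h. 0 \<le> y h \<and> y h \<le> 1)"

definition step_prob ::
  "(outcome \<Rightarrow> real) \<Rightarrow> real \<Rightarrow> (outcome list \<Rightarrow> real) \<Rightarrow> outcome list \<Rightarrow> outcome \<Rightarrow> real" where
  "step_prob p p0 y h w =
     (let a = (case h of [] \<Rightarrow> p0 | w' # _ \<Rightarrow> p w'); b = y h in
      (case w of CC \<Rightarrow> a * b | CD \<Rightarrow> a * (1 - b) | DC \<Rightarrow> (1 - a) * b | DD \<Rightarrow> (1 - a) * (1 - b)))"

fun hist_prob ::
  "(outcome \<Rightarrow> real) \<Rightarrow> real \<Rightarrow> (outcome list \<Rightarrow> real) \<Rightarrow> outcome list \<Rightarrow> real" where
  "hist_prob p p0 y [] = 1"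
| "hist_prob p p0 y (w # h) = hist_prob p p0 y h * step_prob p p0 y h w"

fun hists :: "nat \<Rightarrow> outcome list list" where
  "hists 0 = [[]]"
| "hists (Suc n) = concat (map (\<lambda>h. map (\<lambda>w. w # h) [CC, CD, DC, DD]) (hists n))"

text \<open>v^n: distribution of the outcome of round n (n >= 1).\<close>
definition vdist ::
  "(outcome \<Rightarrow> real) \<Rightarrow> real \<Rightarrow> (outcome list \<Rightarrow> real) \<Rightarrow> nat \<Rightarrow> outcome \<Rightarrow> real" where
  "vdist p p0 y n w = sum_list (map (hist_prob p p0 y) (filter (\<lambda>h. hd h = w) (hists n)))"

definition cesaro ::
  "(outcome \<Rightarrow> real) \<Rightarrow> real \<Rightarrow> (outcome list \<Rightarrow> real) \<Rightarrow> nat \<Rightarrow> outcome \<Rightarrow> real" where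
  "cesaro p p0 y n w = (\<Sum>k=1..n. vdist p p0 y k w) / real n"

definition limit_dist ::
  "(outcome \<Rightarrow> real) \<Rightarrow> real \<Rightarrow> (outcome list \<Rightarrow> real) \<Rightarrow> (outcome \<Rightarrow> real) \<Rightarrow> bool" where
  "limit_dist p p0 y v \<longleftrightarrow>
     (\<exists>r::nat \<Rightarrow> nat. strict_mono r \<and> (\<forall>w. (\<lambda>n. cesaro p p0 y (r n) w) \<longlonglongrightarrow> v w))"

definition payX :: "real \<Rightarrow> real \<Rightarrow> real \<Rightarrow> real \<Rightarrow> (outcome \<Rightarrow> real) \<Rightarrow> real" where
  "payX T R P S v = v CC * R + v CD * S + v DC * T + v DD * P"

definition payY :: "real \<Rightarrow> real \<Rightarrow> real \<Rightarrow> real \<Rightarrow> (outcome \<Rightarrow> real) \<Rightarrow> real" where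
  "payY T R P S v = v CC * R + v CD * T + v DC * S + v DD * P"

definition nash_type :: "real \<Rightarrow> real \<Rightarrow> real \<Rightarrow> real \<Rightarrow> (outcome \<Rightarrow> real) \<Rightarrow> bool" where
  "nash_type T R P S p \<longleftrightarrow> agreeable p \<and>
     (\<forall>p0 y v. 0 \<le> p0 \<and> p0 \<le> 1 \<and> Y_pattern y \<and> limit_dist p p0 y v \<and> payY T R P S v \<ge> R
        \<longrightarrow> payY T R P S v = R)"

definition good :: "real \<Rightarrow> real \<Rightarrow> real \<Rightarrow> real \<Rightarrow> (outcome \<Rightarrow> real) \<Rightarrow> bool" where
  "good T R P S p \<longleftrightarrow> agreeable p \<and>
     (\<forall>p0 y v. 0 \<le> p0 \<and> p0 \<le> 1 \<and> Y_pattern y \<and> limit_dist p p0 y v \<and> payY T R P S v \<ge> R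
        \<longrightarrow> payY T R P S v = R \<and> payX T R P S v = R)"

end

theory Submission
  imports Defs "HOL-Analysis.Analysis"
begin

text \<open>
  Whatever Y does, in every limit distribution v the frequency of X's cooperation, v_CC + v_CD,
  equals the expectation of p under v: the Cesaro averages of the outcome distributions of rounds
  n + 1 and n differ by a telescoping term of order 1/n. For agreeable p this reads
  v_DC p_3 + v_DD p_4 = v_CD (1 - p_2), which turns s_Y - R = (T-R) v_CD - (R-S) v_DC - (R-P) v_DD into
    (1 - p_2) (s_Y - R) = v_DC ((T-R) p_3 - (R-S) (1-p_2)) + v_DD ((T-R) p_4 - (R-P) (1-p_2)).
  Under the two inequalities (which force p_2 < 1 unless p = (1,1,0,0)) the right-hand side is
  nonpositive, and if they are strict, s_Y >= R forces v_CD = v_DC = v_DD = 0, hence s_X = s_Y = R.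
  Conversely, against X opening with defection, the Y that defects exactly after mutual cooperation
  (so that v_DD = 0 and v_CC = v_CD) and the Y that always defects (so that v_CC = v_DC = 0) get
  s_Y > R when the first resp. second inequality fails, and s_Y = R > s_X when it is an equality.
\<close>

lemma UNIV_outcome: "UNIV = {CC, CD, DC, DD}"
  using outcome.exhaust by auto

instance outcome :: finite
  by standard (simp add: UNIV_outcome)

definition hist_expect ::
  "(outcome \<Rightarrow> real) \<Rightarrow> real \<Rightarrow> (outcome list \<Rightarrow> real) \<Rightarrow> nat \<Rightarrow> (outcome list \<Rightarrow> real) \<Rightarrow> real"
  where "hist_expect p p0 y n f = (\<Sum>h\<leftarrow>hists n. hist_prob p p0 y h * f h)"

lemma sum_list_extend_hists:
  "(\<Sum>h\<leftarrow>concat (map (\<lambda>h. map (\<lambda>w. w # h) [CC, CD, DC, DD]) hs). f h)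
     = (\<Sum>h\<leftarrow>hs. \<Sum>w\<in>UNIV. f (w # h))"
  by (induct hs) (simp_all add: UNIV_outcome algebra_simps)

lemma hist_expect_Suc:
  "hist_expect p p0 y (Suc n) f
     = hist_expect p p0 y n (\<lambda>h. \<Sum>w\<in>UNIV. step_prob p p0 y h w * f (w # h))"
  unfolding hist_expect_def hists.simps(2) sum_list_extend_hists
  by (simp add: sum_distrib_left mult.assoc)

lemma hist_expect_sum:
  "hist_expect p p0 y n (\<lambda>h. \<Sum>w\<in>A. f w h) = (\<Sum>w\<in>A. hist_expect p p0 y n (f w))"
  unfolding hist_expect_def
  by (induct A rule: infinite_finite_induct) (simp_all add: distrib_left sum_list_addf)

lemma hist_expect_add:
  "hist_expect p p0 y n (\<lambda>h. f h + g h) = hist_expect p p0 y n f + hist_expect p p0 y n g"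
  unfolding hist_expect_def by (simp add: distrib_left sum_list_addf)

lemma hist_expect_cmult:
  "hist_expect p p0 y n (\<lambda>h. c * f h) = c * hist_expect p p0 y n f"
  unfolding hist_expect_def by (simp add: sum_list_const_mult[symmetric] algebra_simps)

lemma sum_step_prob: "(\<Sum>w\<in>UNIV. step_prob p p0 y h w) = 1"
  by (simp add: UNIV_outcome step_prob_def Let_def algebra_simps)

lemma hist_expect_one: "hist_expect p p0 y n (\<lambda>_. 1) = 1"
  by (induct n) (simp_all add: hist_expect_Suc sum_step_prob, simp add: hist_expect_def)

text \<open>The round-0 value of vdist is junk (it tests hd []), so rounds are written Suc n throughout.\<close>

lemma vdist_Suc: "vdist p p0 y (Suc n) w = hist_expect p p0 y n (\<lambda>h. step_prob p p0 y h w)"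
proof -
  have "vdist p p0 y (Suc n) w = hist_expect p p0 y (Suc n) (\<lambda>h. if hd h = w then 1 else 0)"
    unfolding vdist_def hist_expect_def sum_list_map_filter' by (simp add: if_distrib cong: if_cong)
  also have "\<dots> = hist_expect p p0 y n (\<lambda>h. step_prob p p0 y h w)"
    unfolding hist_expect_Suc by (simp add: if_distrib cong: if_cong)
  finally show ?thesis .
qed

lemma sum_vdist: "(\<Sum>w\<in>UNIV. vdist p p0 y (Suc n) w) = 1"
  by (simp add: vdist_Suc hist_expect_sum[symmetric] sum_step_prob hist_expect_one)

lemma hist_expect_last_outcome:
  assumes "\<And>w h. f (w # h) = g w"
  shows "hist_expect p p0 y (Suc n) f = (\<Sum>w\<in>UNIV. g w * vdist p p0 y (Suc n) w)"
  by (simp add: hist_expect_Suc assms vdist_Suc hist_expect_sum[symmetric]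
      hist_expect_cmult[symmetric] mult.commute)

definition valid_play :: "(outcome \<Rightarrow> real) \<Rightarrow> real \<Rightarrow> (outcome list \<Rightarrow> real) \<Rightarrow> bool" where
  "valid_play p p0 y \<longleftrightarrow> mem1 p \<and> 0 \<le> p0 \<and> p0 \<le> 1 \<and> Y_pattern y"

lemma step_prob_nonneg:
  assumes "valid_play p p0 y"
  shows "0 \<le> step_prob p p0 y h w"
proof -
  have "0 \<le> (case h of [] \<Rightarrow> p0 | w' # _ \<Rightarrow> p w')" "(case h of [] \<Rightarrow> p0 | w' # _ \<Rightarrow> p w') \<le> 1"
    using assms by (auto simp: valid_play_def mem1_def split: list.split)
  moreover have "0 \<le> y h" "y h \<le> 1"
    using assms by (auto simp: valid_play_def Y_pattern_def)
  ultimately show ?thesis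
    by (cases w) (simp_all add: step_prob_def Let_def)
qed

lemma hist_prob_nonneg: "valid_play p p0 y \<Longrightarrow> 0 \<le> hist_prob p p0 y h"
  by (induct h) (simp_all add: step_prob_nonneg)

lemma vdist_nonneg: "valid_play p p0 y \<Longrightarrow> 0 \<le> vdist p p0 y n w"
  unfolding vdist_def by (auto intro!: sum_list_nonneg simp: hist_prob_nonneg)

lemma vdist_le_1: "valid_play p p0 y \<Longrightarrow> vdist p p0 y (Suc n) w \<le> 1"
  using member_le_sum[where f = "vdist p p0 y (Suc n)" and i = w and A = UNIV]
  by (simp add: vdist_nonneg sum_vdist)

definition dot :: "(outcome \<Rightarrow> real) \<Rightarrow> (outcome \<Rightarrow> real) \<Rightarrow> real" where
  "dot a v = (\<Sum>w\<in>UNIV. a w * v w)"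

lemma dot_indicator_outcome: "dot (indicator A) v = (\<Sum>w\<in>A. v w)"
  unfolding dot_def indicator_def by (simp add: if_distrib sum.If_cases)

lemma abs_dot_vdist_le:
  assumes "valid_play p p0 y" "\<And>w. \<bar>a w\<bar> \<le> B"
  shows "\<bar>dot a (vdist p p0 y (Suc n))\<bar> \<le> B"
proof -
  have "\<bar>dot a (vdist p p0 y (Suc n))\<bar> \<le> (\<Sum>w\<in>UNIV. \<bar>a w\<bar> * vdist p p0 y (Suc n) w)"
    unfolding dot_def using sum_abs by (rule order_trans) (simp add: abs_mult vdist_nonneg assms(1))
  also have "\<dots> \<le> (\<Sum>w\<in>UNIV. B * vdist p p0 y (Suc n) w)"
    by (intro sum_mono mult_right_mono assms vdist_nonneg)
  finally show ?thesis by (simp add: sum_distrib_left[symmetric] sum_vdist)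
qed

lemma vdist_X_coop:
  "dot (indicator {CC, CD}) (vdist p p0 y (Suc (Suc n))) = dot p (vdist p p0 y (Suc n))"
proof -
  have "dot (indicator {CC, CD}) (vdist p p0 y (Suc (Suc n)))
      = hist_expect p p0 y (Suc n) (\<lambda>h. case h of [] \<Rightarrow> p0 | w # _ \<Rightarrow> p w)"
    by (simp add: dot_indicator_outcome vdist_Suc hist_expect_add[symmetric] step_prob_def Let_def
        algebra_simps)
  also have "\<dots> = dot p (vdist p p0 y (Suc n))"
    unfolding dot_def by (rule hist_expect_last_outcome) simp
  finally show ?thesis .
qed

lemma vdist_Y_coop:
  assumes "\<And>w h. y (w # h) = q w"
  shows "dot (indicator {CC, DC}) (vdist p p0 y (Suc (Suc n))) = dot q (vdist p p0 y (Suc n))"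
proof -
  have "dot (indicator {CC, DC}) (vdist p p0 y (Suc (Suc n))) = hist_expect p p0 y (Suc n) y"
    by (simp add: dot_indicator_outcome vdist_Suc hist_expect_add[symmetric] step_prob_def Let_def
        algebra_simps)
  also have "\<dots> = dot q (vdist p p0 y (Suc n))"
    unfolding dot_def by (rule hist_expect_last_outcome) (rule assms)
  finally show ?thesis .
qed

lemma cesaro_eq: "cesaro p p0 y n w = (\<Sum>k<n. vdist p p0 y (Suc k) w) / real n"
  unfolding cesaro_def by (simp add: sum.atLeast1_atMost_eq)

lemma dot_cesaro: "dot a (cesaro p p0 y n) = (\<Sum>k<n. dot a (vdist p p0 y (Suc k))) / real n"
proof -
  have "dot a (cesaro p p0 y n) = (\<Sum>w\<in>UNIV. \<Sum>k<n. a w * vdist p p0 y (Suc k) w) / real n"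
    unfolding dot_def cesaro_eq by (simp add: sum_distrib_left sum_divide_distrib)
  then show ?thesis
    unfolding dot_def by (simp add: sum.swap[where A = UNIV])
qed

lemma limit_dist_tendsto_dot:
  assumes "limit_dist p p0 y v"
  obtains r where "strict_mono r" "\<And>a. (\<lambda>n. dot a (cesaro p p0 y (r n))) \<longlonglongrightarrow> dot a v"
proof -
  obtain r where r: "strict_mono r" "\<And>w. (\<lambda>n. cesaro p p0 y (r n) w) \<longlonglongrightarrow> v w"
    using assms unfolding limit_dist_def by blast
  have "(\<lambda>n. dot a (cesaro p p0 y (r n))) \<longlonglongrightarrow> dot a v" for a
    unfolding dot_def by (intro tendsto_intros r(2))
  with r(1) show thesis
    by (rule that)
qed

lemma limit_dist_dot_eq_if_shift:
  assumes "limit_dist p p0 y v"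
    and shift: "\<And>n. dot a (vdist p p0 y (Suc (Suc n))) = dot c (vdist p p0 y (Suc n))"
    and bound: "\<And>n. \<bar>dot a (vdist p p0 y (Suc n))\<bar> \<le> B"
  shows "dot a v = dot c v"
proof -
  obtain r where r: "strict_mono r" "\<And>b. (\<lambda>n. dot b (cesaro p p0 y (r n))) \<longlonglongrightarrow> dot b v"
    using limit_dist_tendsto_dot[OF assms(1)] by blast
  define z where "z k = dot a (vdist p p0 y (Suc k))" for k
  define D where "D n = dot c (cesaro p p0 y n) - dot a (cesaro p p0 y n)" for n
  have telescope: "D n = (z n - z 0) / real n" for n
  proof -
    have "(\<Sum>k<n. dot c (vdist p p0 y (Suc k))) - (\<Sum>k<n. dot a (vdist p p0 y (Suc k)))
        = (\<Sum>k<n. z (Suc k) - z k)"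
      unfolding sum_subtractf[symmetric] z_def shift ..
    also have "\<dots> = z n - z 0"
      by (rule sum_lessThan_telescope)
    finally show ?thesis
      unfolding D_def dot_cesaro diff_divide_distrib[symmetric] by simp
  qed
  have "D \<longlonglongrightarrow> 0"
  proof (rule Lim_null_comparison)
    show "\<forall>\<^sub>F n in sequentially. norm (D n) \<le> 2 * B / real n"
    proof (rule always_eventually, rule allI)
      fix n
      have "\<bar>z n - z 0\<bar> \<le> 2 * B"
        using bound[of n] bound[of 0] unfolding z_def by simp
      then show "norm (D n) \<le> 2 * B / real n"
        unfolding telescope by (simp add: divide_right_mono)
    qed
    show "(\<lambda>n. 2 * B / real n) \<longlonglongrightarrow> 0"
      by (rule lim_const_over_n)
  qed
  then have "(D \<circ> r) \<longlonglongrightarrow> 0"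
    using r(1) by (rule LIMSEQ_subseq_LIMSEQ)
  moreover have "(D \<circ> r) \<longlonglongrightarrow> dot c v - dot a v"
    unfolding D_def o_def by (intro tendsto_diff r(2))
  ultimately show ?thesis
    using LIMSEQ_unique by fastforce
qed

lemma cesaro_nonneg: "valid_play p p0 y \<Longrightarrow> 0 \<le> cesaro p p0 y n w"
  unfolding cesaro_def by (intro divide_nonneg_nonneg sum_nonneg vdist_nonneg) auto

lemma cesaro_le_1: "valid_play p p0 y \<Longrightarrow> cesaro p p0 y n w \<le> 1"
proof -
  assume valid: "valid_play p p0 y"
  have "(\<Sum>k<n. vdist p p0 y (Suc k) w) \<le> (\<Sum>k<n. 1)"
    by (intro sum_mono vdist_le_1 valid)
  then show ?thesis
    unfolding cesaro_eq by (cases "n = 0") (simp_all add: divide_le_eq_1)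
qed

lemma limit_dist_nonneg:
  assumes "valid_play p p0 y" "limit_dist p p0 y v"
  shows "0 \<le> v w"
proof -
  obtain r where "(\<lambda>n. cesaro p p0 y (r n) w) \<longlonglongrightarrow> v w"
    using assms(2) unfolding limit_dist_def by blast
  then show ?thesis
    by (rule LIMSEQ_le_const) (simp add: cesaro_nonneg[OF assms(1)])
qed

lemma limit_dist_sum:
  assumes "limit_dist p p0 y v"
  shows "v CC + v CD + v DC + v DD = 1"
proof -
  obtain r where r: "strict_mono r" "\<And>a. (\<lambda>n. dot a (cesaro p p0 y (r n))) \<longlonglongrightarrow> dot a v"
    using limit_dist_tendsto_dot[OF assms] by blast
  have "dot (\<lambda>_. 1) (cesaro p p0 y n) = 1" if "n \<ge> 1" for n
    using that unfolding dot_cesaro by (simp add: dot_def sum_vdist)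
  then have "\<forall>\<^sub>F n in sequentially. dot (\<lambda>_. 1) (cesaro p p0 y (r n)) = 1"
    using seq_suble[OF r(1)] by (intro eventually_sequentiallyI[of 1]) (meson le_trans)
  then have "(\<lambda>n. dot (\<lambda>_. 1) (cesaro p p0 y (r n))) \<longlonglongrightarrow> 1"
    by (rule tendsto_eventually)
  with r(2) have "dot (\<lambda>_. 1) v = 1"
    using LIMSEQ_unique by blast
  then show ?thesis
    by (simp add: dot_def UNIV_outcome add.assoc)
qed

lemma limit_dist_exists:
  assumes "valid_play p p0 y"
  obtains v where "limit_dist p p0 y v"
proof -
  define c :: "nat \<Rightarrow> real ^ outcome" where "c n = (\<chi> w. cesaro p p0 y n w)" for n
  have "norm (c n) \<le> real CARD(outcome)" for n
  proof -
    have "norm (c n) \<le> (\<Sum>w\<in>UNIV. \<bar>c n $ w\<bar>)"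
      by (rule norm_le_l1_cart)
    also have "\<dots> \<le> (\<Sum>w\<in>(UNIV :: outcome set). 1)"
      by (rule sum_mono) (simp add: c_def cesaro_nonneg cesaro_le_1 assms)
    finally show ?thesis
      by simp
  qed
  then have "bounded (range c)"
    unfolding bounded_iff by (intro exI[of _ "real CARD(outcome)"]) simp
  then obtain l r where r: "strict_mono r" "(c \<circ> r) \<longlonglongrightarrow> l"
    using bounded_imp_convergent_subsequence by blast
  have "(\<lambda>n. cesaro p p0 y (r n) w) \<longlonglongrightarrow> l $ w" for w
    using tendsto_vec_nth[OF r(2), of w] by (simp add: c_def o_def)
  with r(1) have "limit_dist p p0 y (\<lambda>w. l $ w)"
    unfolding limit_dist_def by blast
  then show thesis
    by (rule that)
qed

lemma limit_dist_eq_0_if_unreachable: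
  assumes "limit_dist p p0 y v" "\<And>h. step_prob p p0 y h w = 0"
  shows "v w = 0"
proof -
  obtain r where lim: "(\<lambda>n. cesaro p p0 y (r n) w) \<longlonglongrightarrow> v w"
    using assms(1) unfolding limit_dist_def by blast
  have "cesaro p p0 y n w = 0" for n
    using hist_expect_cmult[where c = 0 and f = "\<lambda>_. 0"]
    unfolding cesaro_eq vdist_Suc assms(2) by simp
  with lim show ?thesis
    by (simp add: LIMSEQ_const_iff)
qed

lemma limit_dist_X_coop:
  assumes "valid_play p p0 y" "limit_dist p p0 y v"
  shows "v CC + v CD = dot p v"
proof -
  have "dot (indicator {CC, CD}) v = dot p v"
    using assms(2) vdist_X_coop abs_dot_vdist_le[OF assms(1), of _ 1]
    by (rule limit_dist_dot_eq_if_shift) simp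
  then show ?thesis
    by (simp add: dot_indicator_outcome)
qed

lemma limit_dist_Y_coop:
  assumes "valid_play p p0 y" "limit_dist p p0 y v" "\<And>w h. y (w # h) = q w"
  shows "v CC + v DC = dot q v"
proof -
  have "dot (indicator {CC, DC}) v = dot q v"
    using assms(2) vdist_Y_coop[where q = q, OF assms(3)] abs_dot_vdist_le[OF assms(1), of _ 1]
    by (rule limit_dist_dot_eq_if_shift) simp
  then show ?thesis
    by (simp add: dot_indicator_outcome)
qed

lemma limit_dist_balance:
  assumes "valid_play p p0 y" "limit_dist p p0 y v" "agreeable p"
  shows "v DC * p DC + v DD * p DD = v CD * (1 - p CD)"
  using limit_dist_X_coop[OF assms(1,2)] assms(3)
  by (simp add: dot_def UNIV_outcome agreeable_def algebra_simps)

lemma payY_minus_R: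
  assumes "v CC + v CD + v DC + v DD = 1"
  shows "payY T R P S v - R = (T - R) * v CD - (R - S) * v DC - (R - P) * v DD"
proof -
  have "payY T R P S v - R = payY T R P S v - R * (v CC + v CD + v DC + v DD)"
    using assms by simp
  then show ?thesis
    unfolding payY_def by (simp add: algebra_simps)
qed

lemma payX_minus_R:
  assumes "v CC + v CD + v DC + v DD = 1"
  shows "payX T R P S v - R = (T - R) * v DC - (R - S) * v CD - (R - P) * v DD"
proof -
  have "payX T R P S v - R = payX T R P S v - R * (v CC + v CD + v DC + v DD)"
    using assms by simp
  then show ?thesis
    unfolding payX_def by (simp add: algebra_simps)
qed

lemma payY_excess_identity:
  assumes "valid_play p p0 y" "limit_dist p p0 y v" "agreeable p"
  shows "(1 - p CD) * (payY T R P S v - R)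
    = v DC * ((T - R) * p DC - (R - S) * (1 - p CD)) + v DD * ((T - R) * p DD - (R - P) * (1 - p CD))"
proof -
  have "(1 - p CD) * (payY T R P S v - R)
      = (T - R) * (v CD * (1 - p CD)) - (1 - p CD) * ((R - S) * v DC + (R - P) * v DD)"
    unfolding payY_minus_R[OF limit_dist_sum[OF assms(2)]] by (simp add: algebra_simps)
  also have "\<dots> = v DC * ((T - R) * p DC - (R - S) * (1 - p CD))
      + v DD * ((T - R) * p DD - (R - P) * (1 - p CD))"
    unfolding limit_dist_balance[OF assms, symmetric] by (simp add: algebra_simps)
  finally show ?thesis .
qed

lemma payY_le_R:
  assumes "valid_play p p0 y" "limit_dist p p0 y v" "agreeable p" "p CD < 1"
    and "(T - R) * p DC \<le> (R - S) * (1 - p CD)" "(T - R) * p DD \<le> (R - P) * (1 - p CD)"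
  shows "payY T R P S v \<le> R"
proof -
  have "(1 - p CD) * (payY T R P S v - R) \<le> 0"
    unfolding payY_excess_identity[OF assms(1-3)]
    using limit_dist_nonneg[OF assms(1,2)] assms(5,6)
    by (intro add_nonpos_nonpos mult_nonneg_nonpos) auto
  with assms(4) show ?thesis
    by (simp add: mult_le_0_iff)
qed

lemma limit_dist_mutual_coop_if_payY_ge_R:
  assumes "valid_play p p0 y" "limit_dist p p0 y v" "agreeable p" "p CD < 1"
    and "(T - R) * p DC < (R - S) * (1 - p CD)" "(T - R) * p DD < (R - P) * (1 - p CD)"
    and "payY T R P S v \<ge> R"
  shows "v CD = 0" "v DC = 0" "v DD = 0"
proof -
  have nonneg: "0 \<le> v w" for w
    using limit_dist_nonneg[OF assms(1,2)] .
  have DC_term: "v DC * ((T - R) * p DC - (R - S) * (1 - p CD)) \<le> 0"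
    using nonneg assms(5) by (intro mult_nonneg_nonpos) auto
  have DD_term: "v DD * ((T - R) * p DD - (R - P) * (1 - p CD)) \<le> 0"
    using nonneg assms(6) by (intro mult_nonneg_nonpos) auto
  have "0 \<le> (1 - p CD) * (payY T R P S v - R)"
    using assms(4,7) by simp
  then have "v DC * ((T - R) * p DC - (R - S) * (1 - p CD)) = 0"
    and "v DD * ((T - R) * p DD - (R - P) * (1 - p CD)) = 0"
    using DC_term DD_term unfolding payY_excess_identity[OF assms(1-3)] by linarith+
  with assms(5,6) show DC: "v DC = 0" and DD: "v DD = 0"
    by simp_all
  have "v CD * (1 - p CD) = 0"
    using limit_dist_balance[OF assms(1-3)] DC DD by simp
  with assms(4) show "v CD = 0"
    by simp
qed

lemma p_CD_less_1:
  assumes "T > R" "R > P" "P > S" "mem1 p" "agreeable p"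
    and "\<not> (p CC = 1 \<and> p CD = 1 \<and> p DC = 0 \<and> p DD = 0)"
    and "(T - R) * p DC \<le> (R - S) * (1 - p CD)" "(T - R) * p DD \<le> (R - P) * (1 - p CD)"
  shows "p CD < 1"
proof (rule ccontr)
  assume "\<not> p CD < 1"
  with assms(4) have "p CD = 1"
    unfolding mem1_def by (metis linorder_not_le order_antisym)
  with assms(1,7,8) have "p DC \<le> 0" "p DD \<le> 0"
    by (simp_all add: mult_le_0_iff)
  with assms(4) have "p DC = 0" "p DD = 0"
    unfolding mem1_def by (metis order_antisym)+
  with \<open>p CD = 1\<close> assms(5,6) show False
    unfolding agreeable_def by simp
qed

lemma nash_type_payY_le_R:
  assumes "nash_type T R P S p" "valid_play p p0 y" "limit_dist p p0 y v"
  shows "payY T R P S v \<le> R"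
  using assms unfolding nash_type_def valid_play_def by force

lemma good_payX_eq_R:
  assumes "good T R P S p" "valid_play p p0 y" "limit_dist p p0 y v" "payY T R P S v = R"
  shows "payX T R P S v = R"
  using assms unfolding good_def valid_play_def by force

definition defect_after_CC :: "outcome list \<Rightarrow> real" where
  "defect_after_CC h = (case h of [] \<Rightarrow> 1 | w # _ \<Rightarrow> if w = CC then 0 else 1)"

lemma valid_play_defect_after_CC: "mem1 p \<Longrightarrow> valid_play p 0 defect_after_CC"
  unfolding valid_play_def Y_pattern_def defect_after_CC_def by (auto split: list.split)

lemma limit_dist_defect_after_CC:
  assumes "mem1 p" "agreeable p" "limit_dist p 0 defect_after_CC v"
  shows "v DD = 0" "v CD = v CC"
proof -
  have "step_prob p 0 defect_after_CC h DD = 0" for h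
    using assms(2) by (auto simp: step_prob_def defect_after_CC_def agreeable_def split: list.split)
  with assms(3) show DD: "v DD = 0"
    by (rule limit_dist_eq_0_if_unreachable)
  have "v CC + v DC = dot (\<lambda>w. if w = CC then 0 else 1) v"
    using valid_play_defect_after_CC[OF assms(1)] assms(3)
    by (rule limit_dist_Y_coop) (simp add: defect_after_CC_def)
  with DD show "v CD = v CC"
    by (simp add: dot_def UNIV_outcome)
qed

lemma valid_play_all_defect: "mem1 p \<Longrightarrow> valid_play p 0 (\<lambda>_. 0)"
  unfolding valid_play_def Y_pattern_def by simp

lemma limit_dist_all_defect:
  assumes "limit_dist p 0 (\<lambda>_. 0) v"
  shows "v CC = 0" "v DC = 0"
  using assms by (auto intro: limit_dist_eq_0_if_unreachable simp: step_prob_def)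

lemma nash_type_DC_condition:
  assumes "T > R" "R > S" "mem1 p" "nash_type T R P S p"
  shows "(T - R) * p DC \<le> (R - S) * (1 - p CD)"
proof (rule ccontr)
  assume violated: "\<not> ?thesis"
  have agreeable: "agreeable p"
    using assms(4) unfolding nash_type_def by blast
  have valid: "valid_play p 0 defect_after_CC"
    using assms(3) by (rule valid_play_defect_after_CC)
  then obtain v where lim: "limit_dist p 0 defect_after_CC v"
    by (rule limit_dist_exists)
  note v = limit_dist_defect_after_CC[OF assms(3) agreeable lim]
  have "payY T R P S v > R"
  proof (cases "v DC = 0")
    case True
    then have "v CD = 1 / 2"
      using limit_dist_sum[OF lim] v by simp
    with True v have "payY T R P S v - R = (T - R) / 2"
      using payY_minus_R[OF limit_dist_sum[OF lim], of T R P S] by simp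
    with assms(1) show ?thesis
      by simp
  next
    case False
    then have "0 < v DC"
      using limit_dist_nonneg[OF valid lim, of DC] by simp
    with violated have "0 < (1 - p CD) * (payY T R P S v - R)"
      unfolding payY_excess_identity[OF valid lim agreeable] v by simp
    moreover have "p CD \<le> 1"
      using assms(3) unfolding mem1_def by blast
    ultimately show ?thesis
      by (simp add: zero_less_mult_iff)
  qed
  with nash_type_payY_le_R[OF assms(4) valid lim] show False
    by simp
qed

lemma nash_type_DD_condition:
  assumes "T > R" "R > P" "mem1 p" "nash_type T R P S p"
  shows "(T - R) * p DD \<le> (R - P) * (1 - p CD)"
proof (rule ccontr)
  assume violated: "\<not> ?thesis"
  have agreeable: "agreeable p"
    using assms(4) unfolding nash_type_def by blast
  have valid: "valid_play p 0 (\<lambda>_. 0)"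
    using assms(3) by (rule valid_play_all_defect)
  then obtain v where lim: "limit_dist p 0 (\<lambda>_. 0) v"
    by (rule limit_dist_exists)
  note v = limit_dist_all_defect[OF lim]
  have "payY T R P S v > R"
  proof (cases "v DD = 0")
    case True
    then have "v CD = 1"
      using limit_dist_sum[OF lim] v by simp
    with True v have "payY T R P S v - R = T - R"
      using payY_minus_R[OF limit_dist_sum[OF lim], of T R P S] by simp
    with assms(1) show ?thesis
      by simp
  next
    case False
    then have "0 < v DD"
      using limit_dist_nonneg[OF valid lim, of DD] by simp
    with violated have "0 < (1 - p CD) * (payY T R P S v - R)"
      unfolding payY_excess_identity[OF valid lim agreeable] v by simp
    moreover have "p CD \<le> 1"
      using assms(3) unfolding mem1_def by blast
    ultimately show ?thesis
      by (simp add: zero_less_mult_iff)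
  qed
  with nash_type_payY_le_R[OF assms(4) valid lim] show False
    by simp
qed

lemma good_DC_condition_strict:
  assumes "T > R" "R > S" "2 * R > T + S" "mem1 p" "p CD < 1" "good T R P S p"
  shows "(T - R) * p DC \<noteq> (R - S) * (1 - p CD)"
proof
  assume equality: "(T - R) * p DC = (R - S) * (1 - p CD)"
  have agreeable: "agreeable p"
    using assms(6) unfolding good_def by blast
  have valid: "valid_play p 0 defect_after_CC"
    using assms(4) by (rule valid_play_defect_after_CC)
  then obtain v where lim: "limit_dist p 0 defect_after_CC v"
    by (rule limit_dist_exists)
  note v = limit_dist_defect_after_CC[OF assms(4) agreeable lim]
  note sum = limit_dist_sum[OF lim]
  have "(1 - p CD) * (payY T R P S v - R) = 0"
    unfolding payY_excess_identity[OF valid lim agreeable] v equality by simp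
  with assms(5) have payY: "payY T R P S v = R"
    by simp
  then have CD: "(T - R) * v CD = (R - S) * v DC"
    using payY_minus_R[OF sum, of T R P S] v by simp
  have "v DC \<noteq> 0"
  proof
    assume "v DC = 0"
    with CD assms(1) have "v CD = 0"
      by simp
    with \<open>v DC = 0\<close> v sum show False
      by simp
  qed
  then have "0 < v DC"
    using limit_dist_nonneg[OF valid lim, of DC] by simp
  have "(T - R) * (payX T R P S v - R) = (T - R)\<^sup>2 * v DC - (R - S) * ((T - R) * v CD)"
    unfolding payX_minus_R[OF sum, of T R P S] v(1) by (simp add: algebra_simps power2_eq_square)
  also have "\<dots> = ((T - R)\<^sup>2 - (R - S)\<^sup>2) * v DC"
    unfolding CD by (simp add: algebra_simps power2_eq_square)
  also have "\<dots> < 0"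
  proof (rule mult_neg_pos)
    show "(T - R)\<^sup>2 - (R - S)\<^sup>2 < 0"
      using assms(1-3) by (simp add: power2_eq_square mult_strict_mono)
  qed fact
  finally have "payX T R P S v < R"
    using assms(1) by (simp add: mult_less_0_iff)
  with good_payX_eq_R[OF assms(6) valid lim payY] show False
    by simp
qed

lemma good_DD_condition_strict:
  assumes "T > R" "R > P" "P > S" "mem1 p" "p CD < 1" "good T R P S p"
  shows "(T - R) * p DD \<noteq> (R - P) * (1 - p CD)"
proof
  assume equality: "(T - R) * p DD = (R - P) * (1 - p CD)"
  have agreeable: "agreeable p"
    using assms(6) unfolding good_def by blast
  have valid: "valid_play p 0 (\<lambda>_. 0)"
    using assms(4) by (rule valid_play_all_defect)
  then obtain v where lim: "limit_dist p 0 (\<lambda>_. 0) v"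
    by (rule limit_dist_exists)
  note v = limit_dist_all_defect[OF lim]
  note sum = limit_dist_sum[OF lim]
  have "(1 - p CD) * (payY T R P S v - R) = 0"
    unfolding payY_excess_identity[OF valid lim agreeable] v equality by simp
  with assms(5) have payY: "payY T R P S v = R"
    by simp
  have "v DD \<noteq> 0"
  proof
    assume "v DD = 0"
    then have "v CD * (1 - p CD) = 0"
      using limit_dist_balance[OF valid lim agreeable] v by simp
    with assms(5) have "v CD = 0"
      by simp
    with \<open>v DD = 0\<close> v sum show False
      by simp
  qed
  then have "0 < v DD"
    using limit_dist_nonneg[OF valid lim, of DD] by simp
  with assms(2) have "0 < (R - P) * v DD"
    by simp
  moreover have "0 \<le> (R - S) * v CD"
    using limit_dist_nonneg[OF valid lim, of CD] assms(2,3) by simp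
  ultimately have "payX T R P S v < R"
    using payX_minus_R[OF sum, of T R P S] v by simp
  with good_payX_eq_R[OF assms(6) valid lim payY] show False
    by simp
qed

lemma nash_type_iff:
  assumes "T > R" "R > P" "P > S" "mem1 p" "agreeable p"
    and "\<not> (p CC = 1 \<and> p CD = 1 \<and> p DC = 0 \<and> p DD = 0)"
  shows "nash_type T R P S p \<longleftrightarrow>
    (T - R) * p DC \<le> (R - S) * (1 - p CD) \<and> (T - R) * p DD \<le> (R - P) * (1 - p CD)"
proof
  assume "nash_type T R P S p"
  with assms show "(T - R) * p DC \<le> (R - S) * (1 - p CD) \<and> (T - R) * p DD \<le> (R - P) * (1 - p CD)"
    using nash_type_DC_condition nash_type_DD_condition by force
next
  assume conditions: "(T - R) * p DC \<le> (R - S) * (1 - p CD) \<and> (T - R) * p DD \<le> (R - P) * (1 - p CD)"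
  with assms have "p CD < 1"
    using p_CD_less_1 by blast
  with assms(4,5) conditions show "nash_type T R P S p"
    unfolding nash_type_def by (auto intro!: antisym payY_le_R simp: valid_play_def)
qed

lemma good_iff:
  assumes "T > R" "R > P" "P > S" "2 * R > T + S" "mem1 p" "agreeable p"
    and "\<not> (p CC = 1 \<and> p CD = 1 \<and> p DC = 0 \<and> p DD = 0)"
  shows "good T R P S p \<longleftrightarrow>
    (T - R) * p DC < (R - S) * (1 - p CD) \<and> (T - R) * p DD < (R - P) * (1 - p CD)"
proof
  assume good: "good T R P S p"
  then have "nash_type T R P S p"
    unfolding good_def nash_type_def by blast
  then have conditions: "(T - R) * p DC \<le> (R - S) * (1 - p CD)" "(T - R) * p DD \<le> (R - P) * (1 - p CD)"
    using nash_type_iff[OF assms(1-3,5-7)] by simp_all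
  with assms have "p CD < 1"
    using p_CD_less_1 by blast
  with assms good have "(T - R) * p DC \<noteq> (R - S) * (1 - p CD)"
    and "(T - R) * p DD \<noteq> (R - P) * (1 - p CD)"
    by (intro good_DC_condition_strict good_DD_condition_strict; simp)+
  with conditions
  show "(T - R) * p DC < (R - S) * (1 - p CD) \<and> (T - R) * p DD < (R - P) * (1 - p CD)"
    by simp
next
  assume "(T - R) * p DC < (R - S) * (1 - p CD) \<and> (T - R) * p DD < (R - P) * (1 - p CD)"
  then have strict: "(T - R) * p DC < (R - S) * (1 - p CD)" "(T - R) * p DD < (R - P) * (1 - p CD)"
    by simp_all
  with assms have "p CD < 1"
    using p_CD_less_1 by (meson less_imp_le)
  have "payY T R P S v = R \<and> payX T R P S v = R"
    if "valid_play p p0 y" "limit_dist p p0 y v" "payY T R P S v \<ge> R" for p0 y v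
  proof -
    note sum = limit_dist_sum[OF that(2)]
    note mutual_coop =
      limit_dist_mutual_coop_if_payY_ge_R[OF that(1,2) assms(6) \<open>p CD < 1\<close> strict that(3)]
    show ?thesis
      using payY_minus_R[OF sum, of T R P S] payX_minus_R[OF sum, of T R P S]
      by (simp add: mutual_coop)
  qed
  with assms(5,6) show "good T R P S p"
    unfolding good_def valid_play_def by blast
qed

theorem theorem1p5:
  fixes T R P S :: real and p :: "outcome \<Rightarrow> real"
  assumes "T > R" and "R > P" and "P > S" and "2 * R > T + S"
    and "mem1 p" and "agreeable p"
    and "\<not> (p CC = 1 \<and> p CD = 1 \<and> p DC = 0 \<and> p DD = 0)"
  shows "(nash_type T R P S p \<longleftrightarrow>
            (T - R) / (R - S) * p DC \<le> 1 - p CD \<and> (T - R) / (R - P) * p DD \<le> 1 - p CD)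
       \<and> (good T R P S p \<longleftrightarrow>
            (T - R) / (R - S) * p DC < 1 - p CD \<and> (T - R) / (R - P) * p DD < 1 - p CD)"
proof -
  have "R - S > 0" "R - P > 0"
    using assms(2,3) by simp_all
  then have "(T - R) / (R - S) * p DC \<le> 1 - p CD \<longleftrightarrow> (T - R) * p DC \<le> (R - S) * (1 - p CD)"
    and "(T - R) / (R - P) * p DD \<le> 1 - p CD \<longleftrightarrow> (T - R) * p DD \<le> (R - P) * (1 - p CD)"
    and "(T - R) / (R - S) * p DC < 1 - p CD \<longleftrightarrow> (T - R) * p DC < (R - S) * (1 - p CD)"
    and "(T - R) / (R - P) * p DD < 1 - p CD \<longleftrightarrow> (T - R) * p DD < (R - P) * (1 - p CD)"
    by (simp_all add: pos_divide_le_eq pos_divide_less_eq mult.commute)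
  then show ?thesis
    using nash_type_iff[OF assms(1-3,5-7)] good_iff[OF assms] by simp
qed

end
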